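(* Let $L/K$ be a Galois extension of number fields and let $A/L$ be an isotypic abelian variety (isogenous to $B^n$ for a simple $B$) which is a $K$-variety. Let $D=\End(A_L)\otimes_{\mathbb{Z}}\mathbb{Q}$ with center the field $E$, let $\psi:\Gal(L/K)\to\Aut(E)$ be the group homomorphism given by the action $\sigma.\varphi=\mu_\sigma\,{}^\sigma\varphi\,\mu_\sigma^{-1}$, let $G_0=\ker\psi$ and let $E_0\subseteq E$ be the subfield fixed by this action of $\Gal(L/K)$. Then $E/E_0$ is Galois, $G_0$ is a normal subgroup of $\Gal(L/K)$, and there is an isomorphism $\Gal(L/K)/G_0\simeq\Gal(E/E_0)$. Moreover, this isomorphism induces an order-reversing bijection between subgroups $H$ of $\Gal(L/K)$ containing $G_0$ and subextensions of $E/E_0$, given by $H\mapsto E^H=\{\varphi\in E:\ \mu_\sigma\,{}^\sigma\varphi=\varphi\,\mu_\sigma\ \forall\sigma\in H\}$.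
   Context: $A/L$ is a $K$-variety if for each $\sigma\in\Gal(L/K)$ there is an isogeny $\mu_\sigma:{}^\sigma A\to A$ from the Galois conjugate ${}^\sigma A$; ${}^\sigma\varphi$ is the morphism obtained by applying $\sigma$ to the coefficients of $\varphi$, and $\mu_\sigma^{-1}$ is the inverse in $\mathrm{Hom}(A,{}^\sigma A)\otimes\mathbb{Q}$. The element $\mu_\sigma\,{}^\sigma\varphi\,\mu_\sigma^{-1}$ lies in $E$ for $\varphi\in E$, is independent of the choice of $\mu_\sigma$, and $(\sigma,\varphi)\mapsto\mu_\sigma\,{}^\sigma\varphi\,\mu_\sigma^{-1}$ is an action of $\Gal(L/K)$ on $E$ by field automorphisms. *)

theory Defs
  imports "HOL-Algebra.Algebra"
begin

definition aut_group :: "('e, 'm) ring_scheme \<Rightarrow> ('e \<Rightarrow> 'e) monoid" where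
  "aut_group E = \<lparr> carrier = {f. f \<in> ring_iso E E \<and> f \<in> extensional (carrier E)},
                   Group.monoid.mult = (\<lambda>f g. compose (carrier E) f g),
                   Group.monoid.one = restrict id (carrier E) \<rparr>"

definition gal_group :: "('e, 'm) ring_scheme \<Rightarrow> 'e set \<Rightarrow> ('e \<Rightarrow> 'e) monoid" where
  "gal_group E F = (aut_group E) \<lparr> carrier := {f \<in> carrier (aut_group E). \<forall>x\<in>F. f x = x} \<rparr>"

text \<open>Galois extension (finite case, Dummit--Foote definition): F is a subfield of E,
  E has finite degree over F, and |Aut(E/F)| = [E:F].\<close>
definition galois_ext :: "('e, 'm) ring_scheme \<Rightarrow> 'e set \<Rightarrow> bool" where
  "galois_ext E F \<longleftrightarrow> subfield F E \<and> ring.finite_dimension E F (carrier E)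
     \<and> card (carrier (gal_group E F)) = ring.dim E F (carrier E)"

text \<open>Number field: field of characteristic 0, finite-dimensional over its prime field.\<close>
definition number_field :: "('e, 'm) ring_scheme \<Rightarrow> bool" where
  "number_field E \<longleftrightarrow> field E \<and> (\<forall>n::nat. n > 0 \<longrightarrow> [n] \<cdot>\<^bsub>E\<^esub> \<one>\<^bsub>E\<^esub> \<noteq> \<zero>\<^bsub>E\<^esub>)
     \<and> ring.finite_dimension E (generate_field E {}) (carrier E)"

definition fixed_field :: "('e, 'm) ring_scheme \<Rightarrow> ('g \<Rightarrow> 'e \<Rightarrow> 'e) \<Rightarrow> 'g set \<Rightarrow> 'e set" where
  "fixed_field E psi H = {x \<in> carrier E. \<forall>\<sigma>\<in>H. psi \<sigma> x = x}"

end

(*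
  The maps psi(g) form a finite subgroup Gamma of Aut(E), and the theorem is Artin's theorem
  for Gamma together with its Galois correspondence. Dedekind's lemma (distinct characters are
  linearly independent) shows that a field F of dimension n over K has at most n embeddings
  over K, so |Gal(E/K)| <= [E:K]. Artin's argument with a linear relation of minimal support
  among the vectors (g u_j), g in Gamma, shows [E:E^Gamma] <= |Gamma|. Hence [E:E^Gamma] = |Gamma|
  and Gal(E/E^Gamma) = Gamma, which makes G/ker psi isomorphic to Gal(E/E0).
  Subgroups H containing ker psi correspond to the subgroups psi(H) of Gamma, on which
  Delta |-> E^Delta is injective and order reversing because Gal(E/E^Delta) = Delta.
  An intermediate field F equals E^Delta for Delta = Gal(E/F): restriction to F sends Gamma to
  at most [F:E0] embeddings, with the cosets of Delta as fibres, so [E:F] <= |Delta| = [E:E^Delta],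
  while F is contained in E^Delta.
*)

theory Submission
  imports Defs
begin

section \<open>Automorphism groups\<close>

lemma (in ring) ring_iso_cong:
  "f \<in> ring_iso R S \<Longrightarrow> (\<And>x. x \<in> carrier R \<Longrightarrow> f x = g x) \<Longrightarrow> g \<in> ring_iso R S"
  unfolding ring_iso_def ring_hom_def bij_betw_def
  by (auto simp: inj_on_def image_def Pi_def)

lemma carrier_aut_group:
  "carrier (aut_group R) = {f. f \<in> ring_iso R R \<and> f \<in> extensional (carrier R)}"
  by (simp add: aut_group_def)

lemma mult_aut_group: "f \<otimes>\<^bsub>aut_group R\<^esub> g = compose (carrier R) f g"
  by (simp add: aut_group_def)

lemma one_aut_group: "\<one>\<^bsub>aut_group R\<^esub> = restrict id (carrier R)"
  by (simp add: aut_group_def)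

lemma aut_group_closed: "f \<in> carrier (aut_group R) \<Longrightarrow> x \<in> carrier R \<Longrightarrow> f x \<in> carrier R"
  by (auto simp: carrier_aut_group ring_iso_def dest: ring_hom_closed)

lemma (in ring) group_aut_group: "group (aut_group R)"
proof (rule groupI)
  fix f g h
  assume f: "f \<in> carrier (aut_group R)" and g: "g \<in> carrier (aut_group R)"
    and h: "h \<in> carrier (aut_group R)"
  show "f \<otimes>\<^bsub>aut_group R\<^esub> g \<in> carrier (aut_group R)"
    using f g ring_iso_set_trans[of g R R f R]
    by (auto simp: carrier_aut_group mult_aut_group compose_eq intro: ring_iso_cong)
  show "f \<otimes>\<^bsub>aut_group R\<^esub> g \<otimes>\<^bsub>aut_group R\<^esub> h =
        f \<otimes>\<^bsub>aut_group R\<^esub> (g \<otimes>\<^bsub>aut_group R\<^esub> h)"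
    using aut_group_closed[OF h] by (simp add: mult_aut_group compose_assoc[symmetric] Pi_iff)
  show "\<one>\<^bsub>aut_group R\<^esub> \<otimes>\<^bsub>aut_group R\<^esub> f = f"
    using f aut_group_closed[OF f]
    by (intro extensionalityI[of _ "carrier R"])
       (auto simp: carrier_aut_group mult_aut_group one_aut_group compose_eq)
  have "bij_betw f (carrier R) (carrier R)"
    using f by (simp add: carrier_aut_group ring_iso_def)
  then show "\<exists>f'\<in>carrier (aut_group R). f' \<otimes>\<^bsub>aut_group R\<^esub> f = \<one>\<^bsub>aut_group R\<^esub>"
    using f ring_iso_set_sym[OF ring_axioms, of f R]
    by (intro bexI[of _ "restrict (inv_into (carrier R) f) (carrier R)"])
       (auto simp: carrier_aut_group mult_aut_group one_aut_group compose_inv_into_id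
         intro: ring_iso_cong)
next
  show "\<one>\<^bsub>aut_group R\<^esub> \<in> carrier (aut_group R)"
    using ring_iso_set_refl[of R]
    by (auto simp: carrier_aut_group one_aut_group intro: ring_iso_cong)
qed

lemma aut_group_ring_hom: "g \<in> carrier (aut_group R) \<Longrightarrow> g \<in> ring_hom R R"
  by (simp add: carrier_aut_group ring_iso_def)

lemma aut_group_mult_apply: "x \<in> carrier R \<Longrightarrow> (g \<otimes>\<^bsub>aut_group R\<^esub> h) x = g (h x)"
  by (simp add: mult_aut_group compose_eq)

lemma aut_group_one_apply: "x \<in> carrier R \<Longrightarrow> \<one>\<^bsub>aut_group R\<^esub> x = x"
  by (simp add: one_aut_group)

lemma (in ring) aut_group_inv_apply:
  assumes "g \<in> carrier (aut_group R)" and "x \<in> carrier R"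
  shows "(inv\<^bsub>aut_group R\<^esub> g) (g x) = x"
proof -
  interpret A: group "aut_group R" by (rule group_aut_group)
  have "(inv\<^bsub>aut_group R\<^esub> g) (g x) = (inv\<^bsub>aut_group R\<^esub> g \<otimes>\<^bsub>aut_group R\<^esub> g) x"
    using aut_group_mult_apply[OF assms(2)] by metis
  then show ?thesis using assms by (simp add: aut_group_one_apply)
qed

lemma carrier_gal_group:
  "carrier (gal_group R K) = {g \<in> carrier (aut_group R). \<forall>x\<in>K. g x = x}"
  by (simp add: gal_group_def)

lemma gal_group_antimono: "K \<subseteq> F \<Longrightarrow> carrier (gal_group R F) \<subseteq> carrier (gal_group R K)"
  by (auto simp: carrier_gal_group)

lemma (in ring) subgroup_gal_group:
  assumes "F \<subseteq> carrier R"
  shows "subgroup (carrier (gal_group R F)) (aut_group R)"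
proof -
  interpret A: group "aut_group R" by (rule group_aut_group)
  show ?thesis
  proof (rule A.subgroupI)
    show "carrier (gal_group R F) \<subseteq> carrier (aut_group R)"
      by (auto simp: carrier_gal_group)
    show "carrier (gal_group R F) \<noteq> {}"
      using assms
      by (auto simp: carrier_gal_group aut_group_one_apply intro!: exI[of _ "\<one>\<^bsub>aut_group R\<^esub>"])
  next
    fix g h assume "g \<in> carrier (gal_group R F)" "h \<in> carrier (gal_group R F)"
    then show "g \<otimes>\<^bsub>aut_group R\<^esub> h \<in> carrier (gal_group R F)"
      using assms by (auto simp: carrier_gal_group aut_group_mult_apply subset_iff)
  next
    fix g assume g: "g \<in> carrier (gal_group R F)"
    have "(inv\<^bsub>aut_group R\<^esub> g) x = x" if "x \<in> F" for x
      using g that assms aut_group_inv_apply[of g x] by (auto simp: carrier_gal_group subset_iff)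
    then show "inv\<^bsub>aut_group R\<^esub> g \<in> carrier (gal_group R F)"
      using g by (auto simp: carrier_gal_group)
  qed
qed

lemma fixed_field_mono: "\<Gamma> \<subseteq> \<Delta> \<Longrightarrow> fixed_field R \<psi> \<Delta> \<subseteq> fixed_field R \<psi> \<Gamma>"
  by (auto simp: fixed_field_def)

lemma (in cring) ring_hom_cring_endo: "g \<in> ring_hom R R \<Longrightarrow> ring_hom_cring R R g"
  by (intro ring_hom_cringI ring_hom_ringI2 ring_axioms is_cring)

lemma (in ring) restrict_ring_hom:
  assumes "subring F R" and "h \<in> ring_hom R S"
  shows "restrict h F \<in> ring_hom (R\<lparr>carrier := F\<rparr>) S"
  using subringE[OF assms(1)] ring_hom_memE[OF assms(2)]
  by (intro ring_hom_memI) (auto simp: subset_iff)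

lemma (in ring) card_same_restriction_le:
  assumes "F \<subseteq> carrier R" and "finite (carrier (gal_group R F))"
    and "g0 \<in> carrier (aut_group R)" and "\<Gamma> \<subseteq> carrier (aut_group R)"
  shows "card {g \<in> \<Gamma>. restrict g F = restrict g0 F} \<le> card (carrier (gal_group R F))"
proof -
  interpret A: group "aut_group R" by (rule group_aut_group)
  have "{g \<in> \<Gamma>. restrict g F = restrict g0 F} \<subseteq> (\<lambda>h. g0 \<otimes>\<^bsub>aut_group R\<^esub> h) ` carrier (gal_group R F)"
  proof
    fix g assume "g \<in> {g \<in> \<Gamma>. restrict g F = restrict g0 F}"
    then have g: "g \<in> carrier (aut_group R)" "\<forall>x\<in>F. g x = g0 x"
      using assms(4) by (auto simp: restrict_def fun_eq_iff split: if_splits)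
    define h where "h = inv\<^bsub>aut_group R\<^esub> g0 \<otimes>\<^bsub>aut_group R\<^esub> g"
    have "h x = x" if "x \<in> F" for x
      using g assms(1,3) that aut_group_inv_apply[of g0 x]
      by (auto simp: h_def aut_group_mult_apply)
    then have "h \<in> carrier (gal_group R F)" using g assms(3) by (simp add: h_def carrier_gal_group)
    moreover have "g = g0 \<otimes>\<^bsub>aut_group R\<^esub> h"
      using g assms(3) by (simp add: h_def A.m_assoc[symmetric])
    ultimately show "g \<in> (\<lambda>h. g0 \<otimes>\<^bsub>aut_group R\<^esub> h) ` carrier (gal_group R F)" by blast
  qed
  then show ?thesis
    using assms(2) by (meson card_image_le card_mono finite_imageI order_trans)
qed

section \<open>Linear relations\<close>

definition (in ring) left_kernel :: "'j set \<Rightarrow> 'i set \<Rightarrow> ('j \<Rightarrow> 'i \<Rightarrow> 'a) \<Rightarrow> ('j \<Rightarrow> 'a) set"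
  where "left_kernel J I M = {c \<in> J \<rightarrow> carrier R. \<forall>i\<in>I. (\<Oplus>j\<in>J. c j \<otimes> M j i) = \<zero>}"

context cring
begin

lemma left_kernel_cong:
  assumes M: "\<And>j i. j \<in> J \<Longrightarrow> i \<in> I \<Longrightarrow> M j i \<in> carrier R"
    and eq: "\<And>j. j \<in> J \<Longrightarrow> c j = d j"
  shows "c \<in> left_kernel J I M \<longleftrightarrow> d \<in> left_kernel J I M"
proof -
  have "(\<Oplus>j\<in>J. c j \<otimes> M j i) = (\<Oplus>j\<in>J. d j \<otimes> M j i)" if "d \<in> J \<rightarrow> carrier R" "i \<in> I" for i
    using that eq M by (intro finsum_cong') (auto simp: Pi_iff)
  moreover have "c \<in> J \<rightarrow> carrier R \<longleftrightarrow> d \<in> J \<rightarrow> carrier R"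
    using eq by (auto simp: Pi_iff)
  ultimately show ?thesis by (auto simp: left_kernel_def)
qed

lemma left_kernel_add:
  assumes M: "\<And>j i. j \<in> J \<Longrightarrow> i \<in> I \<Longrightarrow> M j i \<in> carrier R"
    and c: "c \<in> left_kernel J I M" and d: "d \<in> left_kernel J I M"
  shows "(\<lambda>j. c j \<oplus> d j) \<in> left_kernel J I M"
proof -
  have cd: "c \<in> J \<rightarrow> carrier R" "d \<in> J \<rightarrow> carrier R"
    using c d by (auto simp: left_kernel_def)
  have "(\<Oplus>j\<in>J. (c j \<oplus> d j) \<otimes> M j i) = (\<Oplus>j\<in>J. c j \<otimes> M j i \<oplus> d j \<otimes> M j i)"
    if "i \<in> I" for i
    using cd M that by (intro finsum_cong') (auto simp: Pi_iff l_distr)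
  also have "\<dots> i = (\<Oplus>j\<in>J. c j \<otimes> M j i) \<oplus> (\<Oplus>j\<in>J. d j \<otimes> M j i)" if "i \<in> I" for i
    using cd M that by (intro finsum_addf) auto
  finally show ?thesis using c d cd by (auto simp: left_kernel_def)
qed

lemma left_kernel_smult:
  assumes "finite J" and M: "\<And>j i. j \<in> J \<Longrightarrow> i \<in> I \<Longrightarrow> M j i \<in> carrier R"
    and a: "a \<in> carrier R" and c: "c \<in> left_kernel J I M"
  shows "(\<lambda>j. a \<otimes> c j) \<in> left_kernel J I M"
proof -
  have c': "c \<in> J \<rightarrow> carrier R" using c by (auto simp: left_kernel_def)
  have "(\<Oplus>j\<in>J. a \<otimes> c j \<otimes> M j i) = (\<Oplus>j\<in>J. a \<otimes> (c j \<otimes> M j i))" if "i \<in> I" for i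
    using a c' M that by (intro finsum_cong') (auto simp: Pi_iff m_assoc)
  also have "\<dots> i = a \<otimes> (\<Oplus>j\<in>J. c j \<otimes> M j i)" if "i \<in> I" for i
    using \<open>finite J\<close> a c' M that by (intro finsum_rdistr[symmetric]) auto
  finally show ?thesis using a c c' by (auto simp: left_kernel_def)
qed

lemma left_kernel_diff:
  assumes "finite J" and M: "\<And>j i. j \<in> J \<Longrightarrow> i \<in> I \<Longrightarrow> M j i \<in> carrier R"
    and c: "c \<in> left_kernel J I M" and d: "d \<in> left_kernel J I M"
  shows "(\<lambda>j. c j \<ominus> d j) \<in> left_kernel J I M"
proof -
  have cd: "c \<in> J \<rightarrow> carrier R" "d \<in> J \<rightarrow> carrier R"
    using c d by (auto simp: left_kernel_def)
  have "(\<lambda>j. c j \<oplus> \<ominus> \<one> \<otimes> d j) \<in> left_kernel J I M"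
    by (intro left_kernel_add left_kernel_smult M c d \<open>finite J\<close>) auto
  moreover have "(\<Oplus>j\<in>J. (c j \<ominus> d j) \<otimes> M j i) = (\<Oplus>j\<in>J. (c j \<oplus> \<ominus> \<one> \<otimes> d j) \<otimes> M j i)"
    if "i \<in> I" for i
    using cd M that by (intro finsum_cong') (auto simp: Pi_iff a_minus_def l_minus)
  ultimately show ?thesis using cd by (auto simp: left_kernel_def)
qed

end

context field
begin

(* One step of Gaussian elimination: a relation for the system in which the pivot M k i0
   has been used to eliminate the equation i0 extends to a relation for the whole system. *)
lemma left_kernel_pivot:
  assumes "finite J" "k \<in> J" "M k i0 \<noteq> \<zero>"
    and M: "\<And>j i. j \<in> J \<Longrightarrow> i \<in> insert i0 I \<Longrightarrow> M j i \<in> carrier R"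
    and c': "c' \<in> left_kernel (J - {k}) I (\<lambda>j i. M j i \<ominus> M j i0 \<otimes> inv (M k i0) \<otimes> M k i)"
  shows "c'(k := \<ominus> (\<Oplus>j\<in>J - {k}. c' j \<otimes> M j i0) \<otimes> inv (M k i0)) \<in> left_kernel J (insert i0 I) M"
proof -
  define p where "p = inv (M k i0)"
  define J' where "J' = J - {k}"
  define S where "S = (\<Oplus>j\<in>J'. c' j \<otimes> M j i0)"
  define c where "c = c'(k := \<ominus> S \<otimes> p)"
  have p: "p \<in> carrier R" "p \<otimes> M k i0 = \<one>"
    using assms(2,3) M unfolding p_def by (auto simp: field_Units)
  have J: "J = insert k J'" "k \<notin> J'" "finite J'"
    using assms(1,2) by (auto simp: J'_def)
  have c'R: "c' \<in> J' \<rightarrow> carrier R" using c' by (simp add: left_kernel_def J'_def)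
  have S: "S \<in> carrier R" unfolding S_def using c'R M J by (intro finsum_closed) auto
  have cR: "c \<in> J \<rightarrow> carrier R" using c'R S p J by (auto simp: c_def)
  have split: "(\<Oplus>j\<in>J. c j \<otimes> M j i) = (\<ominus> S \<otimes> p) \<otimes> M k i \<oplus> (\<Oplus>j\<in>J'. c' j \<otimes> M j i)"
    if "i \<in> insert i0 I" for i
  proof -
    have "(\<Oplus>j\<in>J'. c j \<otimes> M j i) = (\<Oplus>j\<in>J'. c' j \<otimes> M j i)"
      using J c'R M that by (intro finsum_cong') (auto simp: c_def Pi_iff)
    then show ?thesis
      using J cR M that by (simp add: finsum_insert Pi_iff c_def)
  qed
  have reduced: "(\<Oplus>j\<in>J'. c' j \<otimes> M j i) = S \<otimes> (p \<otimes> M k i)" if "i \<in> I" for i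
  proof -
    define N where "N j = M j i \<ominus> M j i0 \<otimes> p \<otimes> M k i" for j
    have "(\<Oplus>j\<in>J'. c' j \<otimes> M j i) = (\<Oplus>j\<in>J'. c' j \<otimes> N j \<oplus> (c' j \<otimes> M j i0) \<otimes> (p \<otimes> M k i))"
    proof (intro finsum_cong')
      fix j assume "j \<in> J'"
      then have "c' j \<in> carrier R" "M j i \<in> carrier R" "M j i0 \<in> carrier R" "M k i \<in> carrier R"
        using J c'R M assms(2) that by auto
      then show "c' j \<otimes> M j i = c' j \<otimes> N j \<oplus> (c' j \<otimes> M j i0) \<otimes> (p \<otimes> M k i)"
        using p(1) unfolding N_def by algebra
    qed (use J c'R M p assms(2) that in \<open>auto simp: N_def Pi_iff\<close>)
    also have "\<dots> = (\<Oplus>j\<in>J'. c' j \<otimes> N j) \<oplus> S \<otimes> (p \<otimes> M k i)"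
      using J c'R M p assms(2) that
      by (simp add: finsum_ldistr N_def S_def Pi_iff)
    also have "(\<Oplus>j\<in>J'. c' j \<otimes> N j) = \<zero>"
      using c' that by (simp add: left_kernel_def N_def J'_def p_def)
    finally show ?thesis using S p M[OF assms(2)] that by simp
  qed
  have "(\<Oplus>j\<in>J. c j \<otimes> M j i) = \<zero>" if "i \<in> insert i0 I" for i
  proof (cases "i = i0")
    case True
    then show ?thesis
      using split[OF that] S p M[OF assms(2) that]
      by (simp add: S_def[symmetric] m_assoc l_minus l_neg)
  next
    case False
    then show ?thesis
      using that split[OF that] reduced[of i] S p M[OF assms(2) that] by (simp, algebra)
  qed
  then show ?thesis using cR by (simp add: left_kernel_def c_def S_def J'_def p_def)
qed

lemma left_kernel_nontrivial:
  assumes "finite I" "finite J" "card I < card J"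
    and "\<And>j i. j \<in> J \<Longrightarrow> i \<in> I \<Longrightarrow> M j i \<in> carrier R"
  shows "\<exists>c \<in> left_kernel J I M. \<exists>j\<in>J. c j \<noteq> \<zero>"
  using assms
proof (induction I arbitrary: J M rule: finite_induct)
  case empty
  then obtain j where "j \<in> J" by fastforce
  then show ?case by (intro bexI[of _ "\<lambda>_. \<one>"]) (auto simp: left_kernel_def)
next
  case (insert i0 I)
  show ?case
  proof (cases "\<forall>j\<in>J. M j i0 = \<zero>")
    case True
    obtain c j where c: "c \<in> left_kernel J I M" "j \<in> J" "c j \<noteq> \<zero>"
      using insert.IH[of J M] insert.hyps insert.prems by auto
    have "(\<Oplus>j\<in>J. c j \<otimes> M j i0) = (\<Oplus>j\<in>J. \<zero>)"
      using True c(1) by (intro finsum_cong') (auto simp: left_kernel_def Pi_iff)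
    then have "c \<in> left_kernel J (insert i0 I) M"
      using c(1) by (auto simp: left_kernel_def)
    then show ?thesis using c by blast
  next
    case False
    then obtain k where k: "k \<in> J" "M k i0 \<noteq> \<zero>" by blast
    have "card I < card (J - {k})"
      using insert.hyps insert.prems(1,2) k(1) by (simp add: card_Diff_singleton)
    then have "\<exists>c' \<in> left_kernel (J - {k}) I (\<lambda>j i. M j i \<ominus> M j i0 \<otimes> inv (M k i0) \<otimes> M k i).
        \<exists>j\<in>J - {k}. c' j \<noteq> \<zero>"
      using insert.prems k by (intro insert.IH) (auto simp: field_Units)
    then obtain c' j
      where c': "c' \<in> left_kernel (J - {k}) I (\<lambda>j i. M j i \<ominus> M j i0 \<otimes> inv (M k i0) \<otimes> M k i)"
        "j \<in> J - {k}" "c' j \<noteq> \<zero>"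
      by blast
    have "c'(k := \<ominus> (\<Oplus>j\<in>J - {k}. c' j \<otimes> M j i0) \<otimes> inv (M k i0)) \<in> left_kernel J (insert i0 I) M"
      using insert.prems k c'(1) by (intro left_kernel_pivot) auto
    moreover have "(c'(k := \<ominus> (\<Oplus>j\<in>J - {k}. c' j \<otimes> M j i0) \<otimes> inv (M k i0))) j \<noteq> \<zero>"
      using c'(2,3) by simp
    ultimately show ?thesis using c'(2) by blast
  qed
qed

end

section \<open>Dedekind's lemma\<close>

context field
begin

(* The relation at y x minus a times the relation at x; with a = t y the coefficient of t
   vanishes, which drives the induction in Dedekind's lemma. *)
lemma left_kernel_twist:
  assumes "finite D" and "y \<in> F" and "a \<in> carrier R"
    and F_mult: "\<And>x. x \<in> F \<Longrightarrow> y \<otimes> x \<in> F"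
    and sR: "\<And>s x. s \<in> D \<Longrightarrow> x \<in> F \<Longrightarrow> s x \<in> carrier R"
    and s_mult: "\<And>s x. s \<in> D \<Longrightarrow> x \<in> F \<Longrightarrow> s (y \<otimes> x) = s y \<otimes> s x"
    and c: "c \<in> left_kernel D F (\<lambda>s x. s x)"
  shows "(\<lambda>s. c s \<otimes> (s y \<ominus> a)) \<in> left_kernel D F (\<lambda>s x. s x)"
proof -
  have cR: "c \<in> D \<rightarrow> carrier R" using c by (simp add: left_kernel_def)
  have "(\<Oplus>s\<in>D. c s \<otimes> s y \<otimes> s x) = (\<Oplus>s\<in>D. c s \<otimes> s (y \<otimes> x))" if "x \<in> F" for x
    using cR sR s_mult \<open>y \<in> F\<close> that F_mult by (intro finsum_cong') (auto simp: Pi_iff m_assoc)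
  then have "(\<lambda>s. c s \<otimes> s y) \<in> left_kernel D F (\<lambda>s x. s x)"
    using c cR sR \<open>y \<in> F\<close> F_mult by (auto simp: left_kernel_def Pi_iff)
  moreover have "(\<lambda>s. a \<otimes> c s) \<in> left_kernel D F (\<lambda>s x. s x)"
    using left_kernel_smult[OF \<open>finite D\<close> _ \<open>a \<in> carrier R\<close> c] sR by blast
  ultimately have "(\<lambda>s. c s \<otimes> s y \<ominus> a \<otimes> c s) \<in> left_kernel D F (\<lambda>s x. s x)"
    using left_kernel_diff[OF \<open>finite D\<close>, of F "\<lambda>s x. s x"] sR by blast
  moreover have eq: "c s \<otimes> s y \<ominus> a \<otimes> c s = c s \<otimes> (s y \<ominus> a)" if "s \<in> D" for s
  proof -
    have "c s \<in> carrier R" "s y \<in> carrier R" using cR sR \<open>y \<in> F\<close> that by auto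
    then show ?thesis using \<open>a \<in> carrier R\<close> by algebra
  qed
  ultimately show ?thesis
    using left_kernel_cong[of D F "\<lambda>s x. s x" "\<lambda>s. c s \<otimes> s y \<ominus> a \<otimes> c s" "\<lambda>s. c s \<otimes> (s y \<ominus> a)"] sR
    by blast
qed

lemma distinct_characters_independent:
  assumes "finite D" and "\<one> \<in> F" and F_mult: "\<And>x y. x \<in> F \<Longrightarrow> y \<in> F \<Longrightarrow> x \<otimes> y \<in> F"
    and "\<And>s. s \<in> D \<Longrightarrow> s \<in> F \<rightarrow> carrier R"
    and "\<And>s. s \<in> D \<Longrightarrow> s \<one> = \<one>"
    and "\<And>s x y. s \<in> D \<Longrightarrow> x \<in> F \<Longrightarrow> y \<in> F \<Longrightarrow> s (x \<otimes> y) = s x \<otimes> s y"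
    and "\<And>s t. s \<in> D \<Longrightarrow> t \<in> D \<Longrightarrow> s \<noteq> t \<Longrightarrow> \<exists>x\<in>F. s x \<noteq> t x"
    and "c \<in> left_kernel D F (\<lambda>s x. s x)"
  shows "\<forall>s\<in>D. c s = \<zero>"
  using assms(1,4-)
proof (induction D arbitrary: c rule: finite_induct)
  case empty
  then show ?case by simp
next
  case (insert t D)
  have sR: "s x \<in> carrier R" if "s \<in> insert t D" "x \<in> F" for s x
    using insert.prems(1) that by blast
  have cR: "c \<in> insert t D \<rightarrow> carrier R"
    using insert.prems(5) by (simp add: left_kernel_def)
  have c_D: "c s' = \<zero>" if s': "s' \<in> D" for s'
  proof -
    obtain y where y: "y \<in> F" "s' y \<noteq> t y"
      using insert.prems(4)[of s' t] insert.hyps(2) s' by auto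
    define d where "d s = c s \<otimes> (s y \<ominus> t y)" for s
    have d: "d \<in> left_kernel (insert t D) F (\<lambda>s x. s x)"
      unfolding d_def[abs_def]
      by (rule left_kernel_twist) (use insert.hyps insert.prems y sR F_mult in auto)
    have dR: "d \<in> insert t D \<rightarrow> carrier R"
      using cR sR y by (auto simp: d_def Pi_iff)
    have "t y \<ominus> t y = \<zero>"
      using sR[of t y] y by simp
    then have "d t = \<zero>"
      using cR by (simp add: d_def)
    then have "(\<Oplus>s\<in>D. d s \<otimes> s x) = (\<Oplus>s\<in>insert t D. d s \<otimes> s x)" if "x \<in> F" for x
      using insert.hyps dR sR that by (simp add: finsum_insert Pi_iff)
    then have "d \<in> left_kernel D F (\<lambda>s x. s x)"
      using d dR by (simp add: left_kernel_def)
    then have "\<forall>s\<in>D. d s = \<zero>"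
      by (rule insert.IH[rotated -1]) (use insert.prems in auto)
    then have "c s' \<otimes> (s' y \<ominus> t y) = \<zero>"
      using s' by (simp add: d_def)
    moreover have "s' y \<ominus> t y \<noteq> \<zero>"
      using sR s' y by simp
    ultimately show ?thesis
      using integral cR sR s' y by blast
  qed
  have "(\<Oplus>s\<in>D. c s \<otimes> s \<one>) = (\<Oplus>s\<in>D. \<zero>)"
    using c_D by (intro finsum_cong') (auto simp: insert.prems(2))
  moreover have "(\<lambda>s. c s \<otimes> s \<one>) \<in> D \<rightarrow> carrier R"
    using cR sR \<open>\<one> \<in> F\<close> by auto
  ultimately have "(\<Oplus>s\<in>insert t D. c s \<otimes> s \<one>) = c t"
    using insert.hyps cR by (simp add: finsum_insert insert.prems(2))
  then have "c t = \<zero>"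
    using insert.prems(5) \<open>\<one> \<in> F\<close> by (simp add: left_kernel_def)
  then show ?case using c_D by simp
qed

end

lemma (in ring) linear_map_vanishing_on_Span:
  assumes K: "subfield K R" and "set bs \<subseteq> carrier R"
    and linear: "\<And>k x y. k \<in> K \<Longrightarrow> x \<in> Span K bs \<Longrightarrow> y \<in> Span K bs \<Longrightarrow>
      \<phi> (k \<otimes> x \<oplus> y) = k \<otimes> \<phi> x \<oplus> \<phi> y"
    and closed: "\<And>x. x \<in> Span K bs \<Longrightarrow> \<phi> x \<in> carrier R"
    and basis: "\<And>b. b \<in> set bs \<Longrightarrow> \<phi> b = \<zero>"
    and x: "x \<in> Span K bs"
  shows "\<phi> x = \<zero>"
  using assms(2-)
proof (induction bs arbitrary: x)
  case Nil
  have "\<ominus> \<one> \<in> K" "\<phi> \<zero> \<in> carrier R"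
    using subringE(3,5)[OF subfieldE(1)[OF K]] Nil.prems(3) by auto
  then have "\<phi> \<zero> = \<ominus> \<one> \<otimes> \<phi> \<zero> \<oplus> \<phi> \<zero>"
    using Nil.prems(2)[of "\<ominus> \<one>" \<zero> \<zero>] by simp
  also have "\<dots> = \<zero>"
    using \<open>\<phi> \<zero> \<in> carrier R\<close> by (simp add: l_minus l_neg)
  finally show ?case using Nil.prems(5) by simp
next
  case (Cons b bs)
  have sub: "Span K bs \<subseteq> Span K (b # bs)" "b \<in> Span K (b # bs)"
    using mono_Span[OF K, of bs b] Span_base_incl[OF K, of "b # bs"] Cons.prems(1)
    by (auto simp del: Span.simps)
  obtain k v where kv: "k \<in> K" "v \<in> Span K bs" "x = k \<otimes> b \<oplus> v"
    using Cons.prems(5) line_extension_mem_iff by auto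
  have "\<phi> v = \<zero>"
  proof (rule Cons.IH)
    show "\<phi> (k \<otimes> x \<oplus> y) = k \<otimes> \<phi> x \<oplus> \<phi> y"
      if "k \<in> K" "x \<in> Span K bs" "y \<in> Span K bs" for k x y
      using Cons.prems(2) sub that by blast
  qed (use Cons.prems sub kv(2) in auto)
  moreover have "k \<in> carrier R"
    using kv(1) subfieldE(3)[OF K] by auto
  moreover have "\<phi> x = k \<otimes> \<phi> b \<oplus> \<phi> v"
    using Cons.prems(2)[OF kv(1) sub(2)] sub(1) kv by (auto simp del: Span.simps)
  ultimately show ?case
    using Cons.prems(4)[of b] by simp
qed

context field
begin

lemma left_kernel_Span:
  assumes K: "subfield K R" and "set bs \<subseteq> carrier R" and "finite D"
    and sR: "\<And>s x. s \<in> D \<Longrightarrow> x \<in> Span K bs \<Longrightarrow> s x \<in> carrier R"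
    and linear: "\<And>s k x y. s \<in> D \<Longrightarrow> k \<in> K \<Longrightarrow> x \<in> Span K bs \<Longrightarrow> y \<in> Span K bs \<Longrightarrow>
      s (k \<otimes> x \<oplus> y) = k \<otimes> s x \<oplus> s y"
    and c: "c \<in> left_kernel D (set bs) (\<lambda>s x. s x)"
  shows "c \<in> left_kernel D (Span K bs) (\<lambda>s x. s x)"
proof -
  have cR: "c \<in> D \<rightarrow> carrier R" using c by (simp add: left_kernel_def)
  have "(\<Oplus>s\<in>D. c s \<otimes> s x) = \<zero>" if "x \<in> Span K bs" for x
  proof (rule linear_map_vanishing_on_Span[OF K \<open>set bs \<subseteq> carrier R\<close>, of "\<lambda>x. \<Oplus>s\<in>D. c s \<otimes> s x"])
    fix k y z assume kyz: "k \<in> K" "y \<in> Span K bs" "z \<in> Span K bs"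
    then have k: "k \<in> carrier R" using subfieldE(3)[OF K] by auto
    have "c s \<otimes> s (k \<otimes> y \<oplus> z) = k \<otimes> (c s \<otimes> s y) \<oplus> c s \<otimes> s z" if "s \<in> D" for s
    proof -
      have "c s \<in> carrier R" "s y \<in> carrier R" "s z \<in> carrier R"
        using cR sR that kyz by auto
      then show ?thesis using linear[OF that kyz] k by (simp, algebra)
    qed
    then have "(\<Oplus>s\<in>D. c s \<otimes> s (k \<otimes> y \<oplus> z)) = (\<Oplus>s\<in>D. k \<otimes> (c s \<otimes> s y) \<oplus> c s \<otimes> s z)"
      using cR sR kyz k by (intro finsum_cong') (auto simp: Pi_iff)
    also have "\<dots> = (\<Oplus>s\<in>D. k \<otimes> (c s \<otimes> s y)) \<oplus> (\<Oplus>s\<in>D. c s \<otimes> s z)"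
      using cR sR kyz k by (intro finsum_addf) (auto simp: Pi_iff)
    also have "(\<Oplus>s\<in>D. k \<otimes> (c s \<otimes> s y)) = k \<otimes> (\<Oplus>s\<in>D. c s \<otimes> s y)"
      using cR sR kyz k \<open>finite D\<close> by (intro finsum_rdistr[symmetric]) (auto simp: Pi_iff)
    finally show "(\<Oplus>s\<in>D. c s \<otimes> s (k \<otimes> y \<oplus> z)) =
        k \<otimes> (\<Oplus>s\<in>D. c s \<otimes> s y) \<oplus> (\<Oplus>s\<in>D. c s \<otimes> s z)" .
  next
    show "(\<Oplus>s\<in>D. c s \<otimes> s y) \<in> carrier R" if "y \<in> Span K bs" for y
      using cR sR that by (intro finsum_closed) auto
    show "(\<Oplus>s\<in>D. c s \<otimes> s b) = \<zero>" if "b \<in> set bs" for b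
      using c that by (simp add: left_kernel_def)
  qed (use that in auto)
  then show ?thesis using cR by (simp add: left_kernel_def)
qed

lemma card_embeddings_le_dimension:
  assumes K: "subfield K R" and F: "subfield F R" and "K \<subseteq> F" and "dimension n K F"
    and "finite D"
    and hom: "\<And>s. s \<in> D \<Longrightarrow> s \<in> ring_hom (R\<lparr>carrier := F\<rparr>) R"
    and fixes_K: "\<And>s k. s \<in> D \<Longrightarrow> k \<in> K \<Longrightarrow> s k = k"
    and inj: "inj_on (\<lambda>s. restrict s F) D"
  shows "card D \<le> n"
proof (rule ccontr)
  assume "\<not> card D \<le> n"
  obtain bs where bs: "set bs \<subseteq> carrier R" "independent K bs" "length bs = n" "Span K bs = F"
    using exists_base[OF K \<open>dimension n K F\<close>] by blast
  have FR: "F \<subseteq> carrier R" using subfieldE(3)[OF F] .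
  have sR: "s x \<in> carrier R" if "s \<in> D" "x \<in> F" for s x
    using ring_hom_closed[OF hom[OF that(1)]] that(2) by simp
  have "card (set bs) < card D"
    using \<open>\<not> card D \<le> n\<close> bs(3) card_length[of bs] by linarith
  moreover have "set bs \<subseteq> F"
    using Span_base_incl[OF K bs(1)] bs(4) by simp
  ultimately have "\<exists>c \<in> left_kernel D (set bs) (\<lambda>s x. s x). \<exists>s\<in>D. c s \<noteq> \<zero>"
    using \<open>finite D\<close> sR by (intro left_kernel_nontrivial) auto
  then obtain c s0 where c: "c \<in> left_kernel D (set bs) (\<lambda>s x. s x)" "s0 \<in> D" "c s0 \<noteq> \<zero>"
    by blast
  have "c \<in> left_kernel D F (\<lambda>s x. s x)"
  proof (subst bs(4)[symmetric], rule left_kernel_Span[OF K bs(1) \<open>finite D\<close> _ _ c(1)])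
    show "s x \<in> carrier R" if "s \<in> D" "x \<in> Span K bs" for s x
      using sR that bs(4) by simp
    show "s (k \<otimes> x \<oplus> y) = k \<otimes> s x \<oplus> s y"
      if "s \<in> D" "k \<in> K" "x \<in> Span K bs" "y \<in> Span K bs" for s k x y
      using ring_hom_add[OF hom[OF that(1)]] ring_hom_mult[OF hom[OF that(1)]]
        subringE(6)[OF subfieldE(1)[OF F]] fixes_K[OF that(1,2)] that(2-) bs(4) \<open>K \<subseteq> F\<close> FR
      by (auto simp: subset_iff)
  qed
  moreover have "\<exists>x\<in>F. s x \<noteq> t x" if "s \<in> D" "t \<in> D" "s \<noteq> t" for s t
  proof (rule ccontr)
    assume "\<not> (\<exists>x\<in>F. s x \<noteq> t x)"
    then have "restrict s F = restrict t F" by (auto simp: restrict_def)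
    then show False using inj_onD[OF inj _ that(1,2)] that(3) by simp
  qed
  ultimately have "\<forall>s\<in>D. c s = \<zero>"
  proof (intro distinct_characters_independent[OF \<open>finite D\<close>])
    show "\<one> \<in> F" "\<And>x y. x \<in> F \<Longrightarrow> y \<in> F \<Longrightarrow> x \<otimes> y \<in> F"
      using subringE(3,6)[OF subfieldE(1)[OF F]] by auto
    show "s \<in> F \<rightarrow> carrier R" "s \<one> = \<one>" if "s \<in> D" for s
      using sR ring_hom_one[OF hom[OF that]] that by auto
    show "s (x \<otimes> y) = s x \<otimes> s y" if "s \<in> D" "x \<in> F" "y \<in> F" for s x y
      using ring_hom_mult[OF hom[OF that(1)]] that(2,3) by simp
  qed
  then show False using c(2,3) by blast
qed

lemma card_gal_group_le:
  assumes K: "subfield K R" and dim: "dimension n K (carrier R)"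
  shows "finite (carrier (gal_group R K))" "card (carrier (gal_group R K)) \<le> n"
proof -
  have le: "card D \<le> n" if "finite D" "D \<subseteq> carrier (gal_group R K)" for D
  proof (rule card_embeddings_le_dimension[OF K carrier_is_subfield _ dim \<open>finite D\<close>])
    show "K \<subseteq> carrier R" using subfieldE(3)[OF K] .
    show "s k = k" if "s \<in> D" "k \<in> K" for s k
      using that \<open>D \<subseteq> _\<close> by (auto simp: carrier_gal_group)
    show "s \<in> ring_hom (R\<lparr>carrier := carrier R\<rparr>) R" if "s \<in> D" for s
      using that \<open>D \<subseteq> _\<close> aut_group_ring_hom by (auto simp: carrier_gal_group)
    have "restrict s (carrier R) = s" if "s \<in> D" for s
      using that \<open>D \<subseteq> _\<close> by (auto simp: carrier_gal_group carrier_aut_group extensional_restrict)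
    then show "inj_on (\<lambda>s. restrict s (carrier R)) D"
      by (auto intro: inj_onI)
  qed
  show "finite (carrier (gal_group R K))"
  proof (rule ccontr)
    assume "infinite (carrier (gal_group R K))"
    then obtain D where "finite D" "card D = Suc n" "D \<subseteq> carrier (gal_group R K)"
      using infinite_arbitrarily_large by blast
    then show False using le[of D] by simp
  qed
  then show "card (carrier (gal_group R K)) \<le> n" using le by blast
qed

end

section \<open>Artin's theorem\<close>

context field
begin

lemma subfield_fixed_field:
  assumes hom: "\<And>g. g \<in> \<Gamma> \<Longrightarrow> g \<in> ring_hom R R"
  shows "subfield (fixed_field R id \<Gamma>) R"
proof (rule subfieldI')
  show "subring (fixed_field R id \<Gamma>) R"
    by (rule subringI)
      (fastforce simp: fixed_field_def ring_hom_cring.hom_a_inv[OF ring_hom_cring_endo[OF hom]]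
        ring_hom_one[OF hom] ring_hom_mult[OF hom] ring_hom_add[OF hom])+
  show "inv k \<in> fixed_field R id \<Gamma>" if "k \<in> fixed_field R id \<Gamma> - {\<zero>}" for k
  proof -
    have k: "k \<in> carrier R" "k \<noteq> \<zero>" "\<forall>g\<in>\<Gamma>. g k = k"
      using that by (auto simp: fixed_field_def)
    then have inv_k: "inv k \<in> carrier R" "k \<otimes> inv k = \<one>"
      by (auto simp: field_Units)
    have "g (inv k) = inv k" if "g \<in> \<Gamma>" for g
    proof -
      have "k \<otimes> g (inv k) = g (k \<otimes> inv k)"
        using ring_hom_mult[OF hom[OF that] k(1) inv_k(1)] k(3) that by force
      then have "k \<otimes> g (inv k) = \<one>"
        using ring_hom_one[OF hom[OF that]] inv_k(2) by simp
      then show ?thesis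
        using comm_inv_char[OF k(1) ring_hom_closed[OF hom[OF that] inv_k(1)]] by simp
    qed
    then show ?thesis using inv_k by (simp add: fixed_field_def)
  qed
qed

lemma left_kernel_aut_invariant:
  assumes \<Gamma>: "subgroup \<Gamma> (aut_group R)" and "h \<in> \<Gamma>" and "finite J" and u: "u \<in> J \<rightarrow> carrier R"
    and c: "c \<in> left_kernel J \<Gamma> (\<lambda>j g. g (u j))"
  shows "(\<lambda>j. h (c j)) \<in> left_kernel J \<Gamma> (\<lambda>j g. g (u j))"
proof -
  interpret A: group "aut_group R" by (rule group_aut_group)
  have \<Gamma>_aut: "g \<in> carrier (aut_group R)" if "g \<in> \<Gamma>" for g
    using subgroup.subset[OF \<Gamma>] that by auto
  interpret h: ring_hom_cring R R h
    using ring_hom_cring_endo[OF aut_group_ring_hom[OF \<Gamma>_aut[OF \<open>h \<in> \<Gamma>\<close>]]] .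
  have cR: "c \<in> J \<rightarrow> carrier R" using c by (simp add: left_kernel_def)
  have "(\<Oplus>j\<in>J. h (c j) \<otimes> g (u j)) = \<zero>" if "g \<in> \<Gamma>" for g
  proof -
    define r where "r = inv\<^bsub>aut_group R\<^esub> h \<otimes>\<^bsub>aut_group R\<^esub> g"
    have r: "r \<in> \<Gamma>"
      unfolding r_def using \<Gamma> \<open>h \<in> \<Gamma>\<close> that by (simp add: subgroup.m_closed subgroup.m_inv_closed)
    have hr: "h (r x) = g x" if "x \<in> carrier R" for x
    proof -
      have "h \<otimes>\<^bsub>aut_group R\<^esub> r = g"
        unfolding r_def using \<Gamma>_aut \<open>h \<in> \<Gamma>\<close> \<open>g \<in> \<Gamma>\<close> by (simp add: A.m_assoc[symmetric])
      then show ?thesis using aut_group_mult_apply[OF that, of h r] by simp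
    qed
    have rR: "r x \<in> carrier R" if "x \<in> carrier R" for x
      using aut_group_closed[OF \<Gamma>_aut[OF r] that] .
    have "(\<Oplus>j\<in>J. h (c j) \<otimes> g (u j)) = (\<Oplus>j\<in>J. h (c j \<otimes> r (u j)))"
      using cR u rR hr by (intro finsum_cong') (auto simp: Pi_iff aut_group_closed[OF \<Gamma>_aut] that)
    also have "\<dots> = h (\<Oplus>j\<in>J. c j \<otimes> r (u j))"
      using cR u rR by (simp add: Pi_iff comp_def)
    also have "\<dots> = \<zero>"
      using c r by (simp add: left_kernel_def)
    finally show ?thesis .
  qed
  then show ?thesis using cR by (auto simp: left_kernel_def)
qed

end

lemma (in ring) combine_eq_finsum:
  "length Ks = length Us \<Longrightarrow> set Ks \<subseteq> carrier R \<Longrightarrow> set Us \<subseteq> carrier R \<Longrightarrow>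
   combine Ks Us = (\<Oplus>j\<in>{..<length Us}. Ks ! j \<otimes> Us ! j)"
proof (induction Us arbitrary: Ks)
  case Nil
  then show ?case by simp
next
  case (Cons u Us)
  then obtain k Ks' where Ks: "Ks = k # Ks'" by (cases Ks) auto
  have "Ks' ! j \<in> carrier R" "Us ! j \<in> carrier R" if "j < length Us" for j
    using Cons.prems Ks that nth_mem[of j Ks'] nth_mem[of j Us] by auto
  then have "(\<lambda>j. Ks ! j \<otimes> (u # Us) ! j) \<in> Suc ` {..<length Us} \<rightarrow> carrier R"
    using Ks by auto
  then have "(\<Oplus>j\<in>{..<length (u # Us)}. Ks ! j \<otimes> (u # Us) ! j)
      = k \<otimes> u \<oplus> (\<Oplus>j\<in>{..<length Us}. Ks' ! j \<otimes> Us ! j)"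
    using Cons.prems Ks
    by (simp add: lessThan_Suc_eq_insert_0 finsum_insert finsum_reindex del: finsum_Suc)
  then show ?case using Cons Ks by simp
qed

context field
begin

lemma left_kernel_minimal_support_fixed:
  assumes \<Gamma>: "subgroup \<Gamma> (aut_group R)" and "finite J" and u: "u \<in> J \<rightarrow> carrier R"
    and c: "c \<in> left_kernel J \<Gamma> (\<lambda>j g. g (u j))" and k: "k \<in> J" "c k = \<one>"
    and minimal: "\<And>d. d \<in> left_kernel J \<Gamma> (\<lambda>j g. g (u j)) \<Longrightarrow> {j \<in> J. d j \<noteq> \<zero>} \<noteq> {} \<Longrightarrow>
      card {j \<in> J. c j \<noteq> \<zero>} \<le> card {j \<in> J. d j \<noteq> \<zero>}"
    and g: "g \<in> \<Gamma>" and "j \<in> J"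
  shows "g (c j) = c j"
proof -
  define supp where "supp d = {j \<in> J. d j \<noteq> \<zero>}" for d :: "_ \<Rightarrow> 'a"
  have g_aut: "g \<in> carrier (aut_group R)" using subgroup.subset[OF \<Gamma>] g by auto
  have gR: "g x \<in> carrier R" if "x \<in> carrier R" for x
    using aut_group_closed[OF g_aut that] .
  interpret g: ring_hom_cring R R g
    using ring_hom_cring_endo[OF aut_group_ring_hom[OF g_aut]] .
  have MR: "h (u j) \<in> carrier R" if "j \<in> J" "h \<in> \<Gamma>" for j h
    using aut_group_closed[of h] subgroup.subset[OF \<Gamma>] u that by auto
  have cR: "c \<in> J \<rightarrow> carrier R" using c by (simp add: left_kernel_def)
  (* g permutes Gamma, so g applied to a relation is again a relation; subtracting the
     original one removes k from the support. *)
  define d where "d j = g (c j) \<ominus> c j" for j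
  have "(\<lambda>j. g (c j)) \<in> left_kernel J \<Gamma> (\<lambda>j g. g (u j))"
    by (rule left_kernel_aut_invariant) (use assms in auto)
  then have dL: "d \<in> left_kernel J \<Gamma> (\<lambda>j g. g (u j))"
    using left_kernel_diff[of J \<Gamma> "\<lambda>j g. g (u j)" "\<lambda>j. g (c j)" c] \<open>finite J\<close> MR c
    by (simp add: d_def[abs_def])
  have d_zero_iff: "d j = \<zero> \<longleftrightarrow> g (c j) = c j" if "j \<in> J" for j
    using cR gR that by (simp add: d_def Pi_iff)
  have "supp d \<subseteq> supp c - {k}"
    using d_zero_iff k by (auto simp: supp_def)
  moreover have "k \<in> supp c" using k by (simp add: supp_def)
  ultimately have "card (supp d) < card (supp c)"
    using \<open>finite J\<close> by (intro psubset_card_mono) (auto simp: supp_def)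
  then have "supp d = {}" using minimal[OF dL] by (force simp: supp_def)
  then show ?thesis using \<open>j \<in> J\<close> d_zero_iff by (auto simp: supp_def)
qed

lemma independent_fixed_field_length_le:
  assumes \<Gamma>: "subgroup \<Gamma> (aut_group R)" "finite \<Gamma>"
    and us: "independent (fixed_field R id \<Gamma>) us"
  shows "length us \<le> card \<Gamma>"
proof (rule ccontr)
  assume "\<not> length us \<le> card \<Gamma>"
  define J where "J = {..<length us}"
  define u where "u j = us ! j" for j
  define L where "L = left_kernel J \<Gamma> (\<lambda>j g. g (u j))"
  define supp where "supp c = {j \<in> J. c j \<noteq> \<zero>}" for c :: "nat \<Rightarrow> 'a"
  have uR: "u \<in> J \<rightarrow> carrier R"
    using independent_in_carrier[OF us] by (auto simp: u_def J_def)
  have \<Gamma>_aut: "g \<in> carrier (aut_group R)" if "g \<in> \<Gamma>" for g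
    using subgroup.subset[OF \<Gamma>(1)] that by auto
  have MR: "g (u j) \<in> carrier R" if "j \<in> J" "g \<in> \<Gamma>" for j g
    using aut_group_closed[OF \<Gamma>_aut] uR that by auto
  have "\<exists>c \<in> L. \<exists>j\<in>J. c j \<noteq> \<zero>"
    unfolding L_def using \<open>\<not> length us \<le> card \<Gamma>\<close> \<Gamma>(2) MR
    by (intro left_kernel_nontrivial) (auto simp: J_def)
  then obtain c1 where "c1 \<in> L \<and> supp c1 \<noteq> {}" by (auto simp: supp_def)
  then have "\<exists>c. (c \<in> L \<and> supp c \<noteq> {}) \<and>
      (\<forall>c'. c' \<in> L \<and> supp c' \<noteq> {} \<longrightarrow> card (supp c) \<le> card (supp c'))"
    by (rule ex_has_least_nat[where m = "\<lambda>c. card (supp c)"])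
  then obtain c0 where c0: "c0 \<in> L" "supp c0 \<noteq> {}"
    and minimal: "\<And>c. c \<in> L \<Longrightarrow> supp c \<noteq> {} \<Longrightarrow> card (supp c0) \<le> card (supp c)"
    by blast
  obtain k where k: "k \<in> J" "c0 k \<noteq> \<zero>" using c0(2) by (auto simp: supp_def)
  have c0R: "c0 \<in> J \<rightarrow> carrier R" using c0(1) by (simp add: L_def left_kernel_def)
  then have "c0 k \<in> Units R" using k by (auto simp: field_Units)
  define c where "c j = inv (c0 k) \<otimes> c0 j" for j
  have cL: "c \<in> L"
    unfolding c_def[abs_def] L_def using c0(1) MR \<open>c0 k \<in> Units R\<close>
    by (intro left_kernel_smult) (auto simp: J_def L_def)
  have cR: "c \<in> J \<rightarrow> carrier R" using cL by (simp add: L_def left_kernel_def)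
  have ck: "c k = \<one>" using \<open>c0 k \<in> Units R\<close> by (simp add: c_def)
  have "inv (c0 k) \<in> carrier R - {\<zero>}"
    using Units_inv_Units[OF \<open>c0 k \<in> Units R\<close>] field_Units by simp
  then have "supp c = supp c0"
    using c0R integral by (auto simp: supp_def c_def Pi_iff)
  then have c_fixed: "g (c j) = c j" if "g \<in> \<Gamma>" "j \<in> J" for g j
    using left_kernel_minimal_support_fixed[OF \<Gamma>(1) _ uR cL[unfolded L_def] k(1) ck] minimal that
    by (auto simp: J_def L_def supp_def)
  define Ks where "Ks = map c [0..<length us]"
  have Ks: "length Ks = length us" "set Ks \<subseteq> fixed_field R id \<Gamma>" "set Ks \<subseteq> carrier R"
    using c_fixed cR by (auto simp: Ks_def fixed_field_def J_def)
  have "\<one>\<^bsub>aut_group R\<^esub> \<in> \<Gamma>" using subgroup.one_closed[OF \<Gamma>(1)] .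
  then have "(\<Oplus>j\<in>J. c j \<otimes> \<one>\<^bsub>aut_group R\<^esub> (u j)) = \<zero>"
    using cL by (simp add: L_def left_kernel_def)
  moreover have "(\<Oplus>j\<in>J. c j \<otimes> \<one>\<^bsub>aut_group R\<^esub> (u j)) = combine Ks us"
    unfolding combine_eq_finsum[OF Ks(1,3) independent_in_carrier[OF us]]
    using cR uR by (intro finsum_cong') (auto simp: Ks_def J_def u_def Pi_iff aut_group_one_apply)
  ultimately have "set Ks \<subseteq> {\<zero>}"
    using independent_imp_trivial_combine[OF subfield_fixed_field us Ks(2)]
      aut_group_ring_hom \<Gamma>_aut Ks(1)
    by auto
  moreover have "c k \<in> set Ks" using k(1) by (simp add: Ks_def J_def)
  ultimately show False using ck by auto
qed

end

lemma (in ring) dimension_if_independent_length_bounded: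
  assumes K: "subfield K R" and bound: "\<And>us. independent K us \<Longrightarrow> length us \<le> N"
  shows "\<exists>n \<le> N. dimension n K (carrier R)"
proof -
  have "\<exists>us. independent K us \<and> (\<forall>vs. independent K vs \<longrightarrow> length vs \<le> length us)"
    using Lattices_Big.ex_has_greatest_nat[of "independent K" "[]" length "Suc N"] bound
    by (simp add: less_Suc_eq_le)
  then obtain us where us: "independent K us"
    and maximal: "\<And>vs. independent K vs \<Longrightarrow> length vs \<le> length us"
    by blast
  have "Span K us = carrier R"
  proof (rule ccontr)
    assume "Span K us \<noteq> carrier R"
    then obtain v where "v \<in> carrier R" "v \<notin> Span K us"
      using Span_in_carrier[OF subfieldE(3)[OF K] independent_in_carrier[OF us]] by blast
    then have "independent K (v # us)" using independent.li_Cons[OF _ _ us] by simp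
    then show False using maximal[of "v # us"] by simp
  qed
  then show ?thesis using dimensionI[OF K us] bound[OF us] by auto
qed

context field
begin

lemma artin:
  assumes \<Gamma>: "subgroup \<Gamma> (aut_group R)" "finite \<Gamma>"
  shows "dimension (card \<Gamma>) (fixed_field R id \<Gamma>) (carrier R)"
    and "carrier (gal_group R (fixed_field R id \<Gamma>)) = \<Gamma>"
proof -
  let ?K = "fixed_field R id \<Gamma>"
  have \<Gamma>_aut: "\<Gamma> \<subseteq> carrier (aut_group R)" using subgroup.subset[OF \<Gamma>(1)] .
  have K: "subfield ?K R" using \<Gamma>_aut aut_group_ring_hom by (intro subfield_fixed_field) auto
  obtain n where n: "n \<le> card \<Gamma>" "dimension n ?K (carrier R)"
    using dimension_if_independent_length_bounded[OF K independent_fixed_field_length_le[OF \<Gamma>]]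
    by blast
  have \<Gamma>_gal: "\<Gamma> \<subseteq> carrier (gal_group R ?K)"
    using \<Gamma>_aut by (auto simp: carrier_gal_group fixed_field_def)
  moreover note card_gal_group_le[OF K n(2)]
  ultimately have "card \<Gamma> \<le> card (carrier (gal_group R ?K))" "card (carrier (gal_group R ?K)) \<le> n"
    by (auto intro: card_mono)
  then have "n = card \<Gamma>" and card_gal: "card (carrier (gal_group R ?K)) = card \<Gamma>"
    using n(1) by auto
  then show "dimension (card \<Gamma>) ?K (carrier R)"
    using n(2) by simp
  show "carrier (gal_group R ?K) = \<Gamma>"
    using card_subset_eq[OF card_gal_group_le(1)[OF K n(2)] \<Gamma>_gal] card_gal
    by simp
qed

end

section \<open>The Galois correspondence\<close>

context field
begin

lemma subalgebra_if_subfield: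
  assumes "subfield F R" and "K \<subseteq> F"
  shows "subalgebra K F R"
  using subring.axioms(1)[OF subfieldE(1)[OF assms(1)]] subringE(6)[OF subfieldE(1)[OF assms(1)]]
    assms(2)
  by (auto intro!: subalgebra.intro simp: subalgebra_axioms_def subset_iff)

lemma Span_subset_Span_of_subfield:
  assumes K: "subfield K R" and F: "subfield F R" and "K \<subseteq> F" and "set Us \<subseteq> carrier R"
  shows "Span K Us \<subseteq> Span F Us"
proof -
  have "subalgebra F (Span F Us) R" using Span_is_subalgebra[OF F assms(4)] .
  then have "subalgebra K (Span F Us) R"
    using \<open>K \<subseteq> F\<close> by (auto simp: subalgebra_def subalgebra_axioms_def)
  then show ?thesis using subalgebra_Span_incl[OF K _ Span_base_incl[OF F assms(4)]] by blast
qed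

lemma subfield_eq_if_dimension_le:
  assumes F: "subfield F R" and K: "subfield K R" and "F \<subseteq> K"
    and m: "dimension m F (carrier R)" and n: "dimension n K (carrier R)" and "m \<le> n"
  shows "F = K"
proof -
  have "finite_dimension F K"
    using subalbegra_incl_imp_finite_dimension[OF F finite_dimensionI[OF m]
        subalgebra_if_subfield[OF K \<open>F \<subseteq> K\<close>] subfieldE(3)[OF K]] .
  then obtain b where b: "dimension b F K"
    by blast
  have "m = b * n"
    using telescopic_base[OF F K b n] dimension_is_inj[OF F m] by simp
  moreover have "n \<noteq> 0"
  proof
    assume "n = 0"
    then have "carrier R = {\<zero>}" using dimension_zero[OF K] n by simp
    then show False using one_closed by simp
  qed
  moreover have "b \<noteq> 0"
  proof
    assume "b = 0"
    then have "K = {\<zero>}" using dimension_zero[OF F] b by simp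
    then show False using subringE(3)[OF subfieldE(1)[OF K]] by simp
  qed
  ultimately have "b = 1"
    using \<open>m \<le> n\<close> by (simp add: mult_le_cancel2[of b n 1, simplified])
  then have "dimension 1 F K"
    using b by simp
  moreover have "independent F [\<one>]"
    by (rule independent.li_Cons) auto
  ultimately have "Span F [\<one>] = K" "Span F [\<one>] = F"
    using independent_length_eq_dimension[OF F _ \<open>independent F [\<one>]\<close>]
      subringE(3)[OF subfieldE(1)[OF K]] subringE(3)[OF subfieldE(1)[OF F]] dimension_one[OF F]
    by auto
  then show ?thesis by simp
qed

lemma card_le_dimension_mult_card_gal_group:
  assumes \<Gamma>: "subgroup \<Gamma> (aut_group R)" "finite \<Gamma>"
    and F: "subfield F R" "fixed_field R id \<Gamma> \<subseteq> F"
    and d: "dimension d (fixed_field R id \<Gamma>) F"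
  shows "card \<Gamma> \<le> d * card (carrier (gal_group R F))"
proof -
  let ?K = "fixed_field R id \<Gamma>" and ?\<Delta> = "carrier (gal_group R F)"
  define res where "res g = restrict g F" for g :: "'a \<Rightarrow> 'a"
  have \<Gamma>_aut: "\<Gamma> \<subseteq> carrier (aut_group R)" using subgroup.subset[OF \<Gamma>(1)] .
  have K: "subfield ?K R" using \<Gamma>_aut aut_group_ring_hom by (intro subfield_fixed_field) auto
  have "?\<Delta> \<subseteq> \<Gamma>"
    using gal_group_antimono[OF F(2), of R] artin(2)[OF \<Gamma>] by simp
  then have "finite ?\<Delta>" using \<Gamma>(2) by (rule finite_subset)
  have card_res: "card (res ` \<Gamma>) \<le> d"
  proof (rule card_embeddings_le_dimension[OF K F(1) F(2) d])
    show "finite (res ` \<Gamma>)" using \<Gamma>(2) by simp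
    show "s \<in> ring_hom (R\<lparr>carrier := F\<rparr>) R" if "s \<in> res ` \<Gamma>" for s
      using that \<Gamma>_aut restrict_ring_hom[OF subfieldE(1)[OF F(1)] aut_group_ring_hom]
      by (auto simp: res_def)
    show "s k = k" if "s \<in> res ` \<Gamma>" "k \<in> ?K" for s k
      using that F(2) by (auto simp: res_def fixed_field_def)
    show "inj_on (\<lambda>s. restrict s F) (res ` \<Gamma>)"
      by (rule inj_onI) (auto simp: res_def)
  qed
  have fibre: "card {g \<in> \<Gamma>. res g = r} \<le> card ?\<Delta>" if "r \<in> res ` \<Gamma>" for r
    using that card_same_restriction_le[OF subfieldE(3)[OF F(1)] \<open>finite ?\<Delta>\<close> _ \<Gamma>_aut] \<Gamma>_aut
    by (auto simp: res_def)
  have "\<Gamma> = (\<Union>r\<in>res ` \<Gamma>. {g \<in> \<Gamma>. res g = r})" by auto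
  then have "card \<Gamma> \<le> (\<Sum>r\<in>res ` \<Gamma>. card {g \<in> \<Gamma>. res g = r})"
    using card_UN_le[of "res ` \<Gamma>" "\<lambda>r. {g \<in> \<Gamma>. res g = r}"] \<Gamma>(2) by simp
  also have "\<dots> \<le> card (res ` \<Gamma>) * card ?\<Delta>"
    using sum_bounded_above[of "res ` \<Gamma>" "\<lambda>r. card {g \<in> \<Gamma>. res g = r}" "card ?\<Delta>"] fibre
    by simp
  also have "\<dots> \<le> d * card ?\<Delta>"
    using card_res by simp
  finally show ?thesis .
qed

lemma fixed_field_subset_iff:
  assumes "subgroup \<Delta>1 (aut_group R)" "finite \<Delta>1" "subgroup \<Delta>2 (aut_group R)" "finite \<Delta>2"
  shows "fixed_field R id \<Delta>2 \<subseteq> fixed_field R id \<Delta>1 \<longleftrightarrow> \<Delta>1 \<subseteq> \<Delta>2"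
proof
  assume "fixed_field R id \<Delta>2 \<subseteq> fixed_field R id \<Delta>1"
  then have "carrier (gal_group R (fixed_field R id \<Delta>1))
      \<subseteq> carrier (gal_group R (fixed_field R id \<Delta>2))"
    by (auto simp: carrier_gal_group)
  then show "\<Delta>1 \<subseteq> \<Delta>2"
    using artin(2)[OF assms(1,2)] artin(2)[OF assms(3,4)] by simp
qed (rule fixed_field_mono)

lemma fixed_field_gal_group:
  assumes \<Gamma>: "subgroup \<Gamma> (aut_group R)" "finite \<Gamma>"
    and F: "subfield F R" "fixed_field R id \<Gamma> \<subseteq> F"
  shows "fixed_field R id (carrier (gal_group R F)) = F"
proof -
  let ?K = "fixed_field R id \<Gamma>" and ?\<Delta> = "carrier (gal_group R F)"
  have K: "subfield ?K R"
    using subgroup.subset[OF \<Gamma>(1)] aut_group_ring_hom by (intro subfield_fixed_field) auto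
  have FR: "F \<subseteq> carrier R" using subfieldE(3)[OF F(1)] .
  have "?\<Delta> \<subseteq> \<Gamma>"
    using gal_group_antimono[OF F(2), of R] artin(2)[OF \<Gamma>] by simp
  then have \<Delta>: "subgroup ?\<Delta> (aut_group R)" "finite ?\<Delta>"
    using subgroup_gal_group[OF FR] finite_subset[OF _ \<Gamma>(2)] by auto
  have K': "subfield (fixed_field R id ?\<Delta>) R"
    by (intro subfield_fixed_field) (auto simp: carrier_gal_group aut_group_ring_hom)
  have F_K': "F \<subseteq> fixed_field R id ?\<Delta>"
    using FR by (auto simp: fixed_field_def carrier_gal_group)
  obtain bs where bs: "set bs \<subseteq> carrier R" "independent ?K bs" "Span ?K bs = carrier R"
    using exists_base[OF K artin(1)[OF \<Gamma>]] by blast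
  have "Span F bs = carrier R"
    using Span_subset_Span_of_subfield[OF K F(1,2) bs(1)] Span_in_carrier[OF FR bs(1)] bs(3) by simp
  then obtain e where e: "dimension e F (carrier R)"
    using Span_finite_dimension[OF F(1) bs(1)] by auto
  obtain d where d: "dimension d ?K F"
    using subalbegra_incl_imp_finite_dimension[OF K finite_dimensionI[OF artin(1)[OF \<Gamma>]]
        subalgebra_if_subfield[OF F] FR] by auto
  have "card \<Gamma> = d * e"
    using telescopic_base[OF K F(1) d e] dimension_is_inj[OF K artin(1)[OF \<Gamma>]] by simp
  moreover have "d \<noteq> 0"
  proof
    assume "d = 0"
    then have "F = {\<zero>}" using dimension_zero[OF K] d by simp
    then show False using subringE(3)[OF subfieldE(1)[OF F(1)]] by simp
  qed
  ultimately have "e \<le> card ?\<Delta>"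
    using card_le_dimension_mult_card_gal_group[OF \<Gamma> F d] by simp
  then show ?thesis
    using subfield_eq_if_dimension_le[OF F(1) K' F_K' e artin(1)[OF \<Delta>]] by simp
qed

end

section \<open>Groups acting on a field\<close>

lemma (in group_hom) subgroup_vimage:
  assumes "subgroup K H"
  shows "subgroup {a \<in> carrier G. h a \<in> K} G"
proof (rule G.subgroupI)
  show "{a \<in> carrier G. h a \<in> K} \<noteq> {}"
    using subgroup.one_closed[OF assms] by (auto intro!: exI[of _ "\<one>\<^bsub>G\<^esub>"])
qed (use assms in \<open>auto intro: subgroup.m_closed subgroup.m_inv_closed\<close>)

locale field_action = G: group G + E: field E for G (structure) and E +
  fixes psi
  assumes psi_hom: "psi \<in> hom G (aut_group E)" and finite_G: "finite (carrier G)"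
begin

sublocale group_hom G "aut_group E" psi
  by (simp add: group_hom_def group_hom_axioms_def G.is_group E.group_aut_group psi_hom)

lemma fixed_field_image: "fixed_field E psi H = fixed_field E id (psi ` H)"
  by (auto simp: fixed_field_def)

lemma finite_subgroup_image:
  assumes "subgroup H G"
  shows "subgroup (psi ` H) (aut_group E)" "finite (psi ` H)"
  using subgroup_img_is_subgroup[OF assms] finite_subset[OF subgroup.subset[OF assms] finite_G]
  by auto

lemma image_subset_image_iff:
  assumes H1: "subgroup H1 G" and H2: "subgroup H2 G" "kernel G (aut_group E) psi \<subseteq> H2"
  shows "psi ` H1 \<subseteq> psi ` H2 \<longleftrightarrow> H1 \<subseteq> H2"
proof
  assume sub: "psi ` H1 \<subseteq> psi ` H2"
  show "H1 \<subseteq> H2"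
  proof
    fix a assume a: "a \<in> H1"
    then obtain b where b: "b \<in> H2" "psi a = psi b" using sub by auto
    have ab: "a \<in> carrier G" "b \<in> carrier G"
      using a b subgroup.subset[OF H1] subgroup.subset[OF H2(1)] by auto
    then have "inv b \<otimes> a \<in> kernel G (aut_group E) psi"
      using b(2) by (simp add: kernel_def)
    then have "b \<otimes> (inv b \<otimes> a) \<in> H2"
      using H2 b(1) by (auto intro: subgroup.m_closed)
    then show "a \<in> H2" using ab by (simp add: G.m_assoc[symmetric])
  qed
qed auto

lemma galois_ext_fixed_field: "galois_ext E (fixed_field E psi (carrier G))"
proof -
  let ?K = "fixed_field E id (psi ` carrier G)"
  have K: "subfield ?K E"
    by (intro E.subfield_fixed_field) (auto intro!: aut_group_ring_hom hom_closed)
  note artin = E.artin[OF finite_subgroup_image[OF G.subgroup_self]]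
  show ?thesis
    unfolding galois_ext_def fixed_field_image
    using K artin E.finite_dimensionI[OF artin(1)] E.dimI[OF K artin(1)] by (simp add: over_def)
qed

lemma gal_group_fixed_field:
  "gal_group E (fixed_field E psi (carrier G)) = (aut_group E)\<lparr>carrier := psi ` carrier G\<rparr>"
  using E.artin(2)[OF finite_subgroup_image[OF G.subgroup_self]]
  by (simp add: gal_group_def fixed_field_image[symmetric])

lemma quotient_iso_gal_group:
  "\<exists>h. h \<in> iso (G Mod kernel G (aut_group E) psi) (gal_group E (fixed_field E psi (carrier G)))
       \<and> (\<forall>a\<in>carrier G. h (kernel G (aut_group E) psi #> a) = psi a)"
proof (intro exI conjI ballI)
  let ?Gal = "gal_group E (fixed_field E psi (carrier G))"
  have "group ?Gal"
    unfolding gal_group_fixed_field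
    by (rule subgroup.subgroup_is_group[OF img_is_subgroup is_group])
  then interpret Gal: group_hom G ?Gal psi
    using psi_hom by (auto simp: group_hom_def group_hom_axioms_def hom_def gal_group_fixed_field)
  have "kernel G ?Gal psi = kernel G (aut_group E) psi"
    by (simp add: kernel_def gal_group_fixed_field)
  then show "(\<lambda>U. the_elem (psi ` U)) \<in> iso (G Mod kernel G (aut_group E) psi) ?Gal"
    using Gal.FactGroup_iso_set by (simp add: gal_group_fixed_field)
  fix a assume "a \<in> carrier G"
  then have "psi ` (kernel G (aut_group E) psi #> a) = {psi a}"
    by (auto simp: kernel_def r_coset_def intro!: imageI)
  then show "the_elem (psi ` (kernel G (aut_group E) psi #> a)) = psi a" by simp
qed

lemma subset_iff_fixed_field_subset:
  assumes "subgroup H1 G" "kernel G (aut_group E) psi \<subseteq> H1"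
    and "subgroup H2 G" "kernel G (aut_group E) psi \<subseteq> H2"
  shows "H1 \<subseteq> H2 \<longleftrightarrow> fixed_field E psi H2 \<subseteq> fixed_field E psi H1"
  using E.fixed_field_subset_iff[OF finite_subgroup_image[OF assms(1)]
      finite_subgroup_image[OF assms(3)]]
    image_subset_image_iff[OF assms(1,3,4)]
  by (simp add: fixed_field_image)

lemma exists_subgroup_fixed_field_eq:
  assumes F: "subfield F E" "fixed_field E psi (carrier G) \<subseteq> F"
  shows "\<exists>H. subgroup H G \<and> kernel G (aut_group E) psi \<subseteq> H \<and> fixed_field E psi H = F"
proof -
  let ?\<Delta> = "carrier (gal_group E F)"
  define H where "H = {a \<in> carrier G. psi a \<in> ?\<Delta>}"
  have \<Delta>: "subgroup ?\<Delta> (aut_group E)"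
    using E.subgroup_gal_group[OF subfieldE(3)[OF F(1)]] .
  have "?\<Delta> \<subseteq> psi ` carrier G"
    using gal_group_antimono[OF F(2), of E] E.artin(2)[OF finite_subgroup_image[OF G.subgroup_self]]
    by (simp add: fixed_field_image)
  then have "psi ` H = ?\<Delta>" by (auto simp: H_def)
  moreover have "subgroup H G"
    unfolding H_def using \<Delta> by (rule subgroup_vimage)
  moreover have "kernel G (aut_group E) psi \<subseteq> H"
    using subgroup.one_closed[OF \<Delta>] by (auto simp: H_def kernel_def)
  ultimately show ?thesis
    using E.fixed_field_gal_group[OF finite_subgroup_image[OF G.subgroup_self] F(1)] F(2)
    by (auto simp: fixed_field_image)
qed

lemma bij_betw_fixed_field:
  "bij_betw (fixed_field E psi) {H. subgroup H G \<and> kernel G (aut_group E) psi \<subseteq> H}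
     {F. subfield F E \<and> fixed_field E psi (carrier G) \<subseteq> F}"
proof (rule bij_betw_imageI)
  show "inj_on (fixed_field E psi) {H. subgroup H G \<and> kernel G (aut_group E) psi \<subseteq> H}"
    using subset_iff_fixed_field_subset
    by (intro inj_onI) (metis equalityI mem_Collect_eq order_refl)
  have "subfield (fixed_field E psi H) E \<and> fixed_field E psi (carrier G) \<subseteq> fixed_field E psi H"
    if "subgroup H G" for H
    using subgroup.subset[OF that] fixed_field_mono[of H "carrier G" E psi]
    by (auto simp: fixed_field_image intro!: E.subfield_fixed_field aut_group_ring_hom hom_closed)
  then show "fixed_field E psi ` {H. subgroup H G \<and> kernel G (aut_group E) psi \<subseteq> H}
      = {F. subfield F E \<and> fixed_field E psi (carrier G) \<subseteq> F}"
    using exists_subgroup_fixed_field_eq by fastforce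
qed

end

theorem proposition3p9:
  fixes G :: "('g, 'n) monoid_scheme" (structure)
    and E :: "('e, 'm) ring_scheme"
    and psi :: "'g \<Rightarrow> 'e \<Rightarrow> 'e"
  assumes "group G" and "finite (carrier G)"
    and "number_field E"
    and "psi \<in> hom G (aut_group E)"
  defines "G0 \<equiv> kernel G (aut_group E) psi"
    and "E0 \<equiv> fixed_field E psi (carrier G)"
  shows "galois_ext E E0
    \<and> G0 \<lhd> G
    \<and> (\<exists>h. h \<in> iso (G Mod G0) (gal_group E E0)
           \<and> (\<forall>\<sigma>\<in>carrier G. h (G0 #> \<sigma>) = psi \<sigma>))
    \<and> bij_betw (fixed_field E psi) {H. subgroup H G \<and> G0 \<subseteq> H} {F. subfield F E \<and> E0 \<subseteq> F}
    \<and> (\<forall>H1 H2. subgroup H1 G \<and> G0 \<subseteq> H1 \<longrightarrow> subgroup H2 G \<and> G0 \<subseteq> H2 \<longrightarrow>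
          (H1 \<subseteq> H2 \<longleftrightarrow> fixed_field E psi H2 \<subseteq> fixed_field E psi H1))"
proof -
  interpret field_action G E psi
    using assms(1-4) by (simp add: field_action_def field_action_axioms_def number_field_def)
  show ?thesis
    unfolding G0_def E0_def
    using galois_ext_fixed_field normal_kernel quotient_iso_gal_group bij_betw_fixed_field
      subset_iff_fixed_field_subset
    by blast
qed

end
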